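(* Let $N\ge1$, $\varphi,\gamma\in(0,1)$ with $\varphi+\gamma\ge1$, $\alpha=\min\{\varphi,\gamma\}$. Let $(X_t)_{t\ge0}$ be a Markov chain on $\{0,1\}^N$ whose one-step transition probabilities are $$p_{t-1\to t}(\boldsymbol{x},\boldsymbol{y})=\varphi^{\|\boldsymbol{y}\|}\bar\varphi^{N-\|\boldsymbol{y}\|}\Big\{1+\sum_{A\subseteq[N],A\neq\emptyset}\kappa_{t,A}\prod_{k\in A}\Big(1-\frac{\boldsymbol{y}[k]}{\varphi}\Big)\Big(1-\frac{\boldsymbol{x}[k]}{\gamma}\Big)\Big\},\quad \kappa_{t,A}=\Big(\frac{\alpha}{\bar\alpha}\Big)^{|A|}\mathbb{E}\Big[\prod_{k\in A}\Big(1-\frac{Z_t[k]}{\alpha}\Big)\Big],$$ where each $Z_t$ is a random element of $\{0,1\}^N$ with exchangeable coordinates. Then $(\|X_t\|)_t$ is a Markov chain with transition distribution $$p_{t-1\to t}(\|\boldsymbol{y}\|\mid\|\boldsymbol{x}\|)=\binom{N}{\|\boldsymbol{y}\|}\varphi^{\|\boldsymbol{y}\|}\bar\varphi^{N-\|\boldsymbol{y}\|}\Big\{1+\sum_{k=1}^N\binom{N}{k}\tilde\kappa_{t,k}Q_k(\|\boldsymbol{y}\|;N,\varphi)Q_k(\|\boldsymbol{x}\|;N,\gamma)\Big\},$$ where $\tilde\kappa_{t,k}=(\alpha/\bar\alpha)^k\mathbb{E}[Q_k(\|Z_t\|;N,\alpha)]$.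
   Context: $\bar a=1-a$; $[N]=\{1,\dots,N\}$; $\|\boldsymbol{x}\|$ is the number of ones of $\boldsymbol{x}$ (its Hamming distance from $\boldsymbol{0}$). The Krawtchouk polynomials $Q_n(\zeta;N,a)$ are defined by $\sum_{n=0}^N\binom{N}{n}Q_n(\zeta;N,a)s^n=(1-(\bar a/a)s)^\zeta(1+s)^{N-\zeta}$. *)

theory Defs
  imports "HOL-Computational_Algebra.Polynomial" "HOL-Combinatorics.Permutations"
begin

text \<open>Binary vectors x in {0,1}^N are represented by their support, a subset of {1..N};
  the coordinate x[k] is bit x k and the weight ||x|| is card x.\<close>

definition bit :: "nat set \<Rightarrow> nat \<Rightarrow> real" where
  "bit x k = (if k \<in> x then 1 else 0)"

definition krawtchouk :: "nat \<Rightarrow> real \<Rightarrow> nat \<Rightarrow> nat \<Rightarrow> real" where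
  "krawtchouk N a \<zeta> n =
     coeff ([:1, - ((1 - a) / a):] ^ \<zeta> * [:1, 1:] ^ (N - \<zeta>)) n / real (N choose n)"

text \<open>Law of Z_t: a probability mass function w t on subsets of {1..N}, exchangeable.\<close>

definition exch_law :: "nat \<Rightarrow> (nat set \<Rightarrow> real) \<Rightarrow> bool" where
  "exch_law N w \<longleftrightarrow>
     (\<forall>S \<in> Pow {1..N}. w S \<ge> 0) \<and> (\<Sum>S\<in>Pow {1..N}. w S) = 1 \<and>
     (\<forall>\<pi> S. \<pi> permutes {1..N} \<and> S \<subseteq> {1..N} \<longrightarrow> w (\<pi> ` S) = w S)"

definition kappa :: "nat \<Rightarrow> real \<Rightarrow> (nat \<Rightarrow> nat set \<Rightarrow> real) \<Rightarrow> nat \<Rightarrow> nat set \<Rightarrow> real" where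
  "kappa N \<alpha> w t A = (\<alpha> / (1 - \<alpha>)) ^ card A *
     (\<Sum>S\<in>Pow {1..N}. w t S * (\<Prod>k\<in>A. 1 - bit S k / \<alpha>))"

definition trans_p :: "nat \<Rightarrow> real \<Rightarrow> real \<Rightarrow> (nat \<Rightarrow> nat set \<Rightarrow> real)
                       \<Rightarrow> nat \<Rightarrow> nat set \<Rightarrow> nat set \<Rightarrow> real" where
  "trans_p N \<phi> \<gamma> w t x y =
     (let \<alpha> = min \<phi> \<gamma> in
      \<phi> ^ card y * (1 - \<phi>) ^ (N - card y) *
      (1 + (\<Sum>A\<in>Pow {1..N} - {{}}. kappa N \<alpha> w t A *
              (\<Prod>k\<in>A. (1 - bit y k / \<phi>) * (1 - bit x k / \<gamma>)))))"

definition kappa_tilde :: "nat \<Rightarrow> real \<Rightarrow> (nat \<Rightarrow> nat set \<Rightarrow> real) \<Rightarrow> nat \<Rightarrow> nat \<Rightarrow> real" where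
  "kappa_tilde N \<alpha> w t k = (\<alpha> / (1 - \<alpha>)) ^ k *
     (\<Sum>S\<in>Pow {1..N}. w t S * krawtchouk N \<alpha> (card S) k)"

definition trans_q :: "nat \<Rightarrow> real \<Rightarrow> real \<Rightarrow> (nat \<Rightarrow> nat set \<Rightarrow> real)
                       \<Rightarrow> nat \<Rightarrow> nat \<Rightarrow> nat \<Rightarrow> real" where
  "trans_q N \<phi> \<gamma> w t i j =
     (let \<alpha> = min \<phi> \<gamma> in
      real (N choose j) * \<phi> ^ j * (1 - \<phi>) ^ (N - j) *
      (1 + (\<Sum>k=1..N. real (N choose k) * kappa_tilde N \<alpha> w t k *
              krawtchouk N \<phi> j k * krawtchouk N \<gamma> i k)))"

text \<open>Finite-dimensional distributions of a Markov chain with initial law \<mu> and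
  time-dependent one-step kernels P t (step t-1 to t): probability of the path
  xs 0, ..., xs T.\<close>

definition path_prob :: "('s \<Rightarrow> real) \<Rightarrow> (nat \<Rightarrow> 's \<Rightarrow> 's \<Rightarrow> real) \<Rightarrow> nat \<Rightarrow> (nat \<Rightarrow> 's) \<Rightarrow> real" where
  "path_prob \<mu> P T xs = \<mu> (xs 0) * (\<Prod>t\<in>{1..T}. P t (xs (t - 1)) (xs t))"

end

theory Submission imports Defs begin

(*
  Exchangeability makes the moment E prod_{k in A} (1 - Z[k]/alpha) depend on A only through |A|.
  Averaging it over all A of size k therefore replaces the product by the elementary symmetric
  function of the factors 1 - Z[k]/alpha, which is the coefficient of s^k in
  prod_k (1 + (1 - Z[k]/alpha) s) = (1 - (abar/alpha) s)^|Z| (1 + s)^(N - |Z|), i.e.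
  binom(N,k) Q_k(|Z|; N, alpha); hence kappa_{t,A} = kappa~_{t,|A|}.  The same averaging, applied
  to the uniform weight on a level set ||y|| = j, gives the duality
  sum_{||y|| = j} prod_{k in A} (1 - y[k]/phi) = binom(N,j) Q_|A|(j; N, phi).
  Summing p(x, y) over a level set thus yields an expression in ||x|| alone (the lumped kernel),
  and the path probabilities factor level by level.
*)

definition permutation_invariant :: "'a set \<Rightarrow> ('a set \<Rightarrow> 'b) \<Rightarrow> bool" where
  "permutation_invariant I W \<longleftrightarrow> (\<forall>p S. p permutes I \<and> S \<subseteq> I \<longrightarrow> W (p ` S) = W S)"

lemma permutation_invariantD:
  "permutation_invariant I W \<Longrightarrow> p permutes I \<Longrightarrow> S \<subseteq> I \<Longrightarrow> W (p ` S) = W S"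
  by (simp add: permutation_invariant_def)

lemma exch_law_imp_permutation_invariant:
  "exch_law N W \<Longrightarrow> permutation_invariant {1..N} W"
  by (simp add: exch_law_def permutation_invariant_def)

lemma permutation_invariant_card: "permutation_invariant I (\<lambda>S. f (card S))"
  unfolding permutation_invariant_def
  using card_image[OF inj_on_subset[OF permutes_inj subset_UNIV]] by metis

lemma exists_permutes_image_eq:
  assumes "finite I" "A \<subseteq> I" "B \<subseteq> I" "card A = card B"
  obtains p where "p permutes I" "p ` A = B"
proof -
  have fin: "finite A" "finite B" using assms finite_subset by auto
  obtain f where f: "bij_betw f A B" using finite_same_card_bij[OF fin assms(4)] by blast
  have "card (I - A) = card (I - B)" using assms fin by (simp add: card_Diff_subset)
  then obtain g where g: "bij_betw g (I - A) (I - B)"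
    using finite_same_card_bij assms(1) by (meson finite_Diff)
  define p where "p x = (if x \<in> A then f x else if x \<in> I then g x else x)" for x
  have "bij_betw p A B" using f by (subst bij_betw_cong[where g = f]) (auto simp: p_def)
  moreover have "bij_betw p (I - A) (I - B)"
    using g by (subst bij_betw_cong[where g = g]) (auto simp: p_def)
  ultimately have "bij_betw p (A \<union> (I - A)) (B \<union> (I - B))" by (rule bij_betw_combine) auto
  then have "bij_betw p I I" using assms by (simp add: Un_absorb1)
  then have "p permutes I" by (rule bij_imp_permutes) (use assms(2) in \<open>auto simp: p_def\<close>)
  moreover have "p ` A = B" using \<open>bij_betw p A B\<close> by (simp add: bij_betw_def)
  ultimately show thesis by (rule that)
qed

lemma sum_Pow_permutes_image:
  assumes "p permutes I"
  shows "(\<Sum>S\<in>Pow I. F (p ` S)) = (\<Sum>S\<in>Pow I. F S)"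
  using sum.reindex_bij_betw[OF bij_betw_image_Pow[OF permutes_imp_bij[OF assms]]] .

lemma permutation_invariant_moment_eq:
  fixes W :: "nat set \<Rightarrow> real"
  assumes W: "permutation_invariant I W"
    and "finite I" "A \<subseteq> I" "B \<subseteq> I" "card A = card B"
  shows "(\<Sum>S\<in>Pow I. W S * (\<Prod>i\<in>A. g (bit S i))) = (\<Sum>S\<in>Pow I. W S * (\<Prod>i\<in>B. g (bit S i)))"
proof -
  obtain p where p: "p permutes I" "p ` A = B"
    using exists_permutes_image_eq[OF assms(2-5)] .
  have "(\<Sum>S\<in>Pow I. W S * (\<Prod>i\<in>B. g (bit S i)))
      = (\<Sum>S\<in>Pow I. W (p ` S) * (\<Prod>i\<in>p ` A. g (bit (p ` S) i)))"
    unfolding p(2)[symmetric] by (rule sum_Pow_permutes_image[OF p(1), symmetric])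
  also have "\<dots> = (\<Sum>S\<in>Pow I. W S * (\<Prod>i\<in>A. g (bit S i)))"
  proof (rule sum.cong)
    fix S assume "S \<in> Pow I"
    then have "W (p ` S) = W S" by (simp add: permutation_invariantD[OF W p(1)])
    moreover have "(\<Prod>i\<in>p ` A. g (bit (p ` S) i)) = (\<Prod>i\<in>A. g (bit S i))"
      using permutes_inj[OF p(1)]
      by (simp add: prod.reindex inj_on_def bit_def inj_image_mem_iff)
    ultimately show "W (p ` S) * (\<Prod>i\<in>p ` A. g (bit (p ` S) i)) = W S * (\<Prod>i\<in>A. g (bit S i))"
      by simp
  qed simp
  finally show ?thesis by simp
qed

lemma sum_subsets_card_eq_if_depends_on_card:
  assumes "finite I" "A \<subseteq> I"
    and "\<And>B C. B \<subseteq> I \<Longrightarrow> C \<subseteq> I \<Longrightarrow> card B = card C \<Longrightarrow> F B = F C"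
  shows "(\<Sum>B\<in>{B. B \<subseteq> I \<and> card B = card A}. F B) = real (card I choose card A) * F A"
proof -
  have "(\<Sum>B\<in>{B. B \<subseteq> I \<and> card B = card A}. F B) = (\<Sum>B\<in>{B. B \<subseteq> I \<and> card B = card A}. F A)"
    using assms(3)[OF _ assms(2)] by (intro sum.cong) simp_all
  then show ?thesis by (simp add: n_subsets assms(1))
qed

lemma coeff_prod_linear_factors:
  fixes f :: "'a \<Rightarrow> 'b :: comm_ring_1"
  assumes "finite I"
  shows "coeff (\<Prod>i\<in>I. [:1, f i:]) k = (\<Sum>A\<in>{A. A \<subseteq> I \<and> card A = k}. \<Prod>i\<in>A. f i)"
proof -
  have monom_prod: "(\<Prod>i\<in>A. monom (f i) 1) = monom (\<Prod>i\<in>A. f i) (card A)" if "finite A" for A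
    using that by (induction A rule: finite_induct) (auto simp: mult_monom monom_0 one_pCons)
  have "(\<Prod>i\<in>I. [:1, f i:]) = (\<Prod>i\<in>I. monom (f i) 1 + 1)"
    by (intro prod.cong refl poly_eqI) (auto simp: coeff_pCons coeff_monom split: nat.splits)
  also have "\<dots> = (\<Sum>A\<in>Pow I. (\<Prod>i\<in>A. monom (f i) 1) * (\<Prod>i\<in>I - A. 1))"
    by (rule prod_add[OF assms])
  also have "\<dots> = (\<Sum>A\<in>Pow I. monom (\<Prod>i\<in>A. f i) (card A))"
    using monom_prod finite_subset[OF _ assms] by (intro sum.cong) auto
  finally have "coeff (\<Prod>i\<in>I. [:1, f i:]) k = (\<Sum>A\<in>Pow I. if card A = k then \<Prod>i\<in>A. f i else 0)"
    by (simp add: coeff_sum coeff_monom)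
  also have "\<dots> = (\<Sum>A\<in>{A. A \<subseteq> I \<and> card A = k}. \<Prod>i\<in>A. f i)"
    using assms by (simp add: sum.inter_filter[symmetric])
  finally show ?thesis .
qed

lemma sum_subsets_prod_bit_eq_krawtchouk:
  assumes "finite I" "z \<subseteq> I" "a \<noteq> 0" "k \<le> card I"
  shows "(\<Sum>A\<in>{A. A \<subseteq> I \<and> card A = k}. \<Prod>i\<in>A. 1 - bit z i / a)
         = real (card I choose k) * krawtchouk (card I) a (card z) k"
proof -
  have "finite z" using assms(1,2) finite_subset by blast
  have "(\<Prod>i\<in>I. [:1, 1 - bit z i / a:])
      = (\<Prod>i\<in>I. if i \<in> z then [:1, - ((1 - a) / a):] else [:1, 1:])"
    using assms(3) by (intro prod.cong) (auto simp: bit_def field_simps)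
  also have "\<dots> = [:1, - ((1 - a) / a):] ^ card z * [:1, 1:] ^ (card I - card z)"
    using assms(1,2) \<open>finite z\<close>
    by (simp add: prod.If_cases Int_absorb1 Diff_eq[symmetric] card_Diff_subset)
  finally show ?thesis
    using coeff_prod_linear_factors[OF assms(1), of "\<lambda>i. 1 - bit z i / a" k] assms(4)
    by (simp add: krawtchouk_def)
qed

lemma permutation_invariant_sum_prod_bit_eq_krawtchouk:
  fixes W :: "nat set \<Rightarrow> real"
  assumes W: "permutation_invariant I W" and I: "finite I" and a: "a \<noteq> 0" and A: "A \<subseteq> I"
  shows "(\<Sum>S\<in>Pow I. W S * (\<Prod>k\<in>A. 1 - bit S k / a))
       = (\<Sum>S\<in>Pow I. W S * krawtchouk (card I) a (card S) (card A))"
proof -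
  let ?E = "\<lambda>B. \<Sum>S\<in>Pow I. W S * (\<Prod>k\<in>B. 1 - bit S k / a)"
  have k: "card A \<le> card I" using card_mono[OF I A] .
  have "real (card I choose card A) * (\<Sum>S\<in>Pow I. W S * krawtchouk (card I) a (card S) (card A))
      = (\<Sum>S\<in>Pow I. W S * (\<Sum>B\<in>{B. B \<subseteq> I \<and> card B = card A}. \<Prod>i\<in>B. 1 - bit S i / a))"
    unfolding sum_distrib_left
    by (intro sum.cong refl) (simp add: sum_subsets_prod_bit_eq_krawtchouk[OF I _ a k] mult.left_commute
        flip: sum_distrib_left)
  also have "\<dots> = (\<Sum>B\<in>{B. B \<subseteq> I \<and> card B = card A}. ?E B)"
    unfolding sum_distrib_left by (rule sum.swap)
  also have "\<dots> = real (card I choose card A) * ?E A"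
  proof (rule sum_subsets_card_eq_if_depends_on_card[OF I A])
    show "?E B = ?E C" if "B \<subseteq> I" "C \<subseteq> I" "card B = card C" for B C
      using permutation_invariant_moment_eq[OF W I that, of "\<lambda>b. 1 - b / a"] by simp
  qed
  finally show ?thesis using k by simp
qed

lemma sum_level_prod_bit_eq_krawtchouk:
  assumes "finite I" "a \<noteq> 0" "A \<subseteq> I"
  shows "(\<Sum>y\<in>{y. y \<subseteq> I \<and> card y = j}. \<Prod>i\<in>A. 1 - bit y i / a)
       = real (card I choose j) * krawtchouk (card I) a j (card A)"
proof -
  define W where "W S = (of_bool (card S = j) :: real)" for S :: "nat set"
  have level: "(\<Sum>y\<in>{y. y \<subseteq> I \<and> card y = j}. F y) = (\<Sum>y\<in>Pow I. W y * F y)"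
    for F :: "nat set \<Rightarrow> real"
    using assms(1) by (simp add: W_def Int_def)
  have "permutation_invariant I W"
    unfolding W_def by (rule permutation_invariant_card)
  from permutation_invariant_sum_prod_bit_eq_krawtchouk[OF this assms]
  have "(\<Sum>y\<in>{y. y \<subseteq> I \<and> card y = j}. \<Prod>i\<in>A. 1 - bit y i / a)
      = (\<Sum>y\<in>{y. y \<subseteq> I \<and> card y = j}. krawtchouk (card I) a (card y) (card A))"
    by (simp only: level)
  also have "\<dots> = real (card I choose j) * krawtchouk (card I) a j (card A)"
    using assms(1) by (simp add: n_subsets)
  finally show ?thesis .
qed

lemma sum_nonempty_subsets_prod_bit_eq_krawtchouk:
  assumes I: "finite I" and x: "x \<subseteq> I" and a: "a \<noteq> 0"
  shows "(\<Sum>A\<in>Pow I - {{}}. h (card A) * (\<Prod>k\<in>A. 1 - bit x k / a))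
       = (\<Sum>k=1..card I. h k * real (card I choose k) * krawtchouk (card I) a (card x) k)"
proof -
  let ?X = "\<lambda>A. \<Prod>k\<in>A. 1 - bit x k / a"
  have "card ` (Pow I - {{}}) \<subseteq> {1..card I}"
    using card_mono[OF I] by (auto simp: Suc_le_eq card_gt_0_iff dest: finite_subset[OF _ I])
  then have "(\<Sum>A\<in>Pow I - {{}}. h (card A) * ?X A)
      = (\<Sum>k=1..card I. \<Sum>A\<in>{A\<in>Pow I - {{}}. card A = k}. h (card A) * ?X A)"
    using I by (intro sum.group[symmetric]) auto
  also have "\<dots> = (\<Sum>k=1..card I. h k * (\<Sum>A\<in>{A. A \<subseteq> I \<and> card A = k}. ?X A))"
  proof (rule sum.cong[OF refl])
    fix k :: nat assume "k \<in> {1..card I}"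
    then have "{A\<in>Pow I - {{}}. card A = k} = {A. A \<subseteq> I \<and> card A = k}"
      by auto
    then show "(\<Sum>A\<in>{A\<in>Pow I - {{}}. card A = k}. h (card A) * ?X A)
             = h k * (\<Sum>A\<in>{A. A \<subseteq> I \<and> card A = k}. ?X A)"
      by (simp add: sum_distrib_left)
  qed
  also have "\<dots> = (\<Sum>k=1..card I. h k * real (card I choose k) * krawtchouk (card I) a (card x) k)"
    by (intro sum.cong) (simp_all add: sum_subsets_prod_bit_eq_krawtchouk[OF I x a])
  finally show ?thesis .
qed

lemma kappa_eq_kappa_tilde:
  assumes "permutation_invariant {1..N} (w t)" "\<alpha> \<noteq> 0" "A \<subseteq> {1..N}"
  shows "kappa N \<alpha> w t A = kappa_tilde N \<alpha> w t (card A)"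
  using permutation_invariant_sum_prod_bit_eq_krawtchouk[OF assms(1) _ assms(2,3)]
  by (simp add: kappa_def kappa_tilde_def)

lemma sum_level_trans_p:
  assumes w: "permutation_invariant {1..N} (w t)" and "\<phi> \<noteq> 0" "\<gamma> \<noteq> 0" and x: "x \<subseteq> {1..N}"
  shows "(\<Sum>y\<in>{y\<in>Pow {1..N}. card y = j}. trans_p N \<phi> \<gamma> w t x y) = trans_q N \<phi> \<gamma> w t (card x) j"
proof -
  define I where "I = {1..N}" \<comment> \<open>opaque to simp, which would rewrite {1..N} to {Suc 0..N}\<close>
  have I: "finite I" "card I = N" by (simp_all add: I_def)
  define \<alpha> where "\<alpha> = min \<phi> \<gamma>"
  define c where "c = \<phi> ^ j * (1 - \<phi>) ^ (N - j)"
  define kt where "kt = kappa_tilde N \<alpha> w t"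
  let ?Y = "{y. y \<subseteq> I \<and> card y = j}"
  let ?X = "\<lambda>A. \<Prod>k\<in>A. 1 - bit x k / \<gamma>" and ?Q = "\<lambda>A y. \<Prod>k\<in>A. 1 - bit y k / \<phi>"
  have "\<alpha> \<noteq> 0" using assms by (simp add: \<alpha>_def min_def)
  have "trans_p N \<phi> \<gamma> w t x y = c * (1 + (\<Sum>A\<in>Pow I - {{}}. kt (card A) * ?X A * ?Q A y))"
    if "y \<in> ?Y" for y
    using that kappa_eq_kappa_tilde[of N w t, OF w \<open>\<alpha> \<noteq> 0\<close>] unfolding trans_p_def Let_def
    by (auto simp: I_def \<alpha>_def c_def kt_def prod.distrib mult_ac intro!: sum.cong)
  then have "(\<Sum>y\<in>?Y. trans_p N \<phi> \<gamma> w t x y)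
      = (\<Sum>y\<in>?Y. c * (1 + (\<Sum>A\<in>Pow I - {{}}. kt (card A) * ?X A * ?Q A y)))"
    by (rule sum.cong[OF refl])
  also have "\<dots> = c * (real (card ?Y) + (\<Sum>A\<in>Pow I - {{}}. kt (card A) * ?X A * (\<Sum>y\<in>?Y. ?Q A y)))"
    by (simp add: sum.distrib sum_distrib_left distrib_left mult_ac sum.swap[of _ ?Y])
  also have "\<dots> = c * (real (N choose j) +
      (\<Sum>A\<in>Pow I - {{}}. (kt (card A) * real (N choose j) * krawtchouk N \<phi> j (card A)) * ?X A))"
    using sum_level_prod_bit_eq_krawtchouk[OF I(1) \<open>\<phi> \<noteq> 0\<close>] I
    by (auto simp: n_subsets mult_ac intro!: sum.cong)
  also have "\<dots> = trans_q N \<phi> \<gamma> w t (card x) j"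
    using sum_nonempty_subsets_prod_bit_eq_krawtchouk[OF I(1) _ \<open>\<gamma> \<noteq> 0\<close>,
        of x "\<lambda>k. kt k * real (N choose j) * krawtchouk N \<phi> j k"] x I
    by (simp add: trans_q_def Let_def \<alpha>_def c_def kt_def I_def sum_distrib_left algebra_simps)
  finally show ?thesis by (simp add: I_def)
qed

lemma PiE_fibres_eq:
  "{xs \<in> PiE I (\<lambda>_. S). \<forall>t\<in>I. f (xs t) = js t} = PiE I (\<lambda>t. {x\<in>S. f x = js t})"
  by (auto simp: PiE_def Pi_def)

lemma path_prob_Suc_fun_upd:
  "path_prob \<mu> P (Suc T) (xs(Suc T := y)) = path_prob \<mu> P T xs * P (Suc T) (xs T) y"
proof -
  have "(\<Prod>t\<in>{1..T}. P t ((xs(Suc T := y)) (t - 1)) ((xs(Suc T := y)) t))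
      = (\<Prod>t\<in>{1..T}. P t (xs (t - 1)) (xs t))"
    by (rule prod.cong) auto
  moreover have "{1..Suc T} = insert (Suc T) {1..T}" by auto
  ultimately show ?thesis by (simp add: path_prob_def algebra_simps)
qed

lemma sum_path_prob_lumped:
  fixes P :: "nat \<Rightarrow> 's \<Rightarrow> 's \<Rightarrow> real" and f :: "'s \<Rightarrow> 'b"
  assumes lump: "\<And>t x j. t \<ge> 1 \<Longrightarrow> x \<in> S \<Longrightarrow> (\<Sum>y\<in>{y\<in>S. f y = j}. P t x y) = Q t (f x) j"
  shows "(\<Sum>xs\<in>PiE {0..T} (\<lambda>t. {x\<in>S. f x = js t}). path_prob \<mu> P T xs)
       = (\<Sum>x\<in>{x\<in>S. f x = js 0}. \<mu> x) * (\<Prod>t\<in>{1..T}. Q t (js (t - 1)) (js t))"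
proof (induction T)
  case 0
  have "(\<Sum>xs\<in>PiE {0..0} (\<lambda>t. {x\<in>S. f x = js t}). path_prob \<mu> P 0 xs) = (\<Sum>x\<in>{x\<in>S. f x = js 0}. \<mu> x)"
    by (rule sum.reindex_bij_witness[where i = "\<lambda>x. \<lambda>t\<in>{0..0}. x" and j = "\<lambda>xs. xs 0"])
      (auto simp: path_prob_def PiE_iff extensional_def fun_eq_iff)
  then show ?case by simp
next
  case (Suc T)
  let ?L = "\<lambda>t. {x\<in>S. f x = js t}"
  have "(\<Sum>xs\<in>PiE {0..Suc T} ?L. path_prob \<mu> P (Suc T) xs)
      = (\<Sum>(y, xs)\<in>?L (Suc T) \<times> PiE {0..T} ?L. path_prob \<mu> P (Suc T) (xs(Suc T := y)))"
    by (rule sum.reindex_bij_witness[of _ "\<lambda>(y, xs). xs(Suc T := y)" "\<lambda>xs. (xs (Suc T), xs(Suc T := undefined))"])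
      (auto simp: PiE_def Pi_def extensional_def le_Suc_eq)
  also have "\<dots> = (\<Sum>xs\<in>PiE {0..T} ?L. path_prob \<mu> P T xs * (\<Sum>y\<in>?L (Suc T). P (Suc T) (xs T) y))"
    by (simp add: path_prob_Suc_fun_upd sum.cartesian_product[symmetric] sum.swap[of _ "?L (Suc T)"]
        sum_distrib_left)
  also have "\<dots> = (\<Sum>xs\<in>PiE {0..T} ?L. path_prob \<mu> P T xs) * Q (Suc T) (js T) (js (Suc T))"
    unfolding sum_distrib_right
    by (intro sum.cong refl) (auto simp: PiE_iff lump)
  finally show ?case
    by (simp add: Suc.IH)
qed

theorem proposition8:
  fixes N :: nat and \<phi> \<gamma> :: real
    and w :: "nat \<Rightarrow> nat set \<Rightarrow> real"
    and \<mu> :: "nat set \<Rightarrow> real"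
  assumes "N \<ge> 1"
    and "0 < \<phi>" "\<phi> < 1" "0 < \<gamma>" "\<gamma> < 1" "\<phi> + \<gamma> \<ge> 1"
    and "\<And>t. t \<ge> 1 \<Longrightarrow> exch_law N (w t)"
    and "\<forall>x\<in>Pow {1..N}. \<mu> x \<ge> 0" "(\<Sum>x\<in>Pow {1..N}. \<mu> x) = 1"
  shows "\<forall>T (js :: nat \<Rightarrow> nat).
     (\<Sum>xs \<in> {xs \<in> PiE {0..T} (\<lambda>_. Pow {1..N}). \<forall>t\<in>{0..T}. card (xs t) = js t}.
         path_prob \<mu> (trans_p N \<phi> \<gamma> w) T xs)
     = (\<Sum>x \<in> {x \<in> Pow {1..N}. card x = js 0}. \<mu> x) *
       (\<Prod>t\<in>{1..T}. trans_q N \<phi> \<gamma> w t (js (t - 1)) (js t))"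
proof -
  have lump: "(\<Sum>y\<in>{y\<in>Pow {1..N}. card y = j}. trans_p N \<phi> \<gamma> w t x y) = trans_q N \<phi> \<gamma> w t (card x) j"
    if "t \<ge> 1" "x \<in> Pow {1..N}" for t x j
    using sum_level_trans_p[OF exch_law_imp_permutation_invariant] assms that by simp
  show ?thesis
    unfolding PiE_fibres_eq by (intro allI sum_path_prob_lumped lump)
qed

end
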